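(* Let $\mathsf{P}$ be a stratified program of $\mathcal{H}$. Then its well-founded Herbrand interpretation $\mathcal{M}_\mathsf{P}$ (the Herbrand interpretation whose valuation function is the well-founded model of $\mathsf{Gr(P)}$) is extensional.
   Context: Types of $\mathcal{H}$: base types $\iota$ and $o$; predicate types $\pi::=o\mid\rho\to\pi$; argument types $\rho::=\iota\mid\pi$; every predicate type has the form $\rho_1\to\cdots\to\rho_n\to o$. Terms are built from predicate/individual variables and constants and function symbols (of types $\iota^n\to\iota$) by typed application; atoms are terms of type $o$; literals are atoms, equalities $(\mathsf{E}_1\approx\mathsf{E}_2)$ between terms of type $\iota$, and negated atoms $\sim\mathsf{E}$. A clause is $\mathsf{p}\,\mathsf{V}_1\cdots\mathsf{V}_n\leftarrow\mathsf{L}_1,\dots,\mathsf{L}_m$ with $\mathsf{p}$ a predicate constant of type $\rho_1\to\cdots\to\rho_n\to o$, $\mathsf{V}_i$ distinct variables of types $\rho_i$, $\mathsf{L}_j$ literals; a program is a finite set of clauses. Stratified: a predicate type $\pi$ is greater than $\pi'$ if $\pi=\rho_1\to\cdots\to\rho_n\to\pi'$ with $n\ge1$. $\mathsf{P}$ is stratified if the set of predicate constants appearing in $\mathsf{P}$ can be partitioned into finitely many sets $S_1,\dots,S_r$ (with $\mathit{stratum}(\mathsf{r})=i$ iff $\mathsf{r}\in S_i$) such that for every clause $\mathsf{H}\leftarrow\mathsf{A}_1,\dots,\mathsf{A}_m,\sim\mathsf{B}_1,\dots,\sim\mathsf{B}_n$ of $\mathsf{P}$ whose head has predicate constant $\mathsf{p}$: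 (1) if $\mathsf{A}_i$ is a term starting with a predicate constant $\mathsf{q}$, then $\mathit{stratum}(\mathsf{q})\le\mathit{stratum}(\mathsf{p})$; (2) if $\mathsf{A}_i$ is a term starting with a predicate variable $\mathsf{Q}$, then $\mathit{stratum}(\mathsf{q})\le\mathit{stratum}(\mathsf{p})$ for every predicate constant $\mathsf{q}$ of $\mathsf{P}$ whose type is greater than or equal to the type of $\mathsf{Q}$; (3) if $\mathsf{B}_i$ starts with a predicate constant $\mathsf{q}$, then $\mathit{stratum}(\mathsf{q})<\mathit{stratum}(\mathsf{p})$; (4) if $\mathsf{B}_i$ starts with a predicate variable $\mathsf{Q}$, then $\mathit{stratum}(\mathsf{q})<\mathit{stratum}(\mathsf{p})$ for every predicate constant $\mathsf{q}$ of $\mathsf{P}$ whose type is greater than or equal to the type of $\mathsf{Q}$. Semantics: $U_{\mathsf{P},\rho}$ is the set of ground terms of type $\rho$ built from the symbols of $\mathsf{P}$; $\mathsf{Gr(P)}$ is the set of all clauses obtained from clauses of $\mathsf{P}$ by substituting for each variable an element of $U_{\mathsf{P},\rho}$ of its type, regarded as a propositional program on the ground atoms (ground equalities being the constants true/false according to syntactic identity). $\mathcal{M}_\mathsf{P}$ is the Herbrand interpretation of $\mathsf{P}$ (symbols interpreted by themselves, application syntactic) whose valuation $v$ gives each ground atom its truth value ($\mathit{false},0,\mathit{true}$) in the well-founded model of $\mathsf{Gr(P)}$. Extensional equality: for argument type $\rho$, $\cong_{v,\rho}$ on $U_{\mathsf{P},\rho}$ is defined by: for $\rho=\iota$, syntactic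 equality; for $\rho=o$, $d\cong d'$ iff $v(d)=v(d')$; for $\rho=\rho'\to\pi$, $d\cong d'$ iff $(d\,e)\cong_{v,\pi}(d'\,e')$ for all $e,e'\in U_{\mathsf{P},\rho'}$ with $e\cong_{v,\rho'}e'$. An interpretation with valuation $v$ is extensional if $\cong_{v,\rho}$ is reflexive for every argument type $\rho$. *)

theory Defs
  imports Main
begin

text \<open>Raw types: base types iota (Iota) and o (Bool), and arrows.  The raw datatype also
  contains the types iota^n -> iota of function symbols.\<close>
datatype ty = Iota | Bool | Fn ty ty

fun pred_ty :: "ty \<Rightarrow> bool" where
  "pred_ty Bool = True"
| "pred_ty (Fn r p) = ((r = Iota \<or> pred_ty r) \<and> pred_ty p)"
| "pred_ty Iota = False"

definition arg_ty :: "ty \<Rightarrow> bool" where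
  "arg_ty t = (t = Iota \<or> pred_ty t)"

fun ifun :: "nat \<Rightarrow> ty" where
  "ifun 0 = Iota"
| "ifun (Suc n) = Fn Iota (ifun n)"

definition const_ty :: "ty \<Rightarrow> bool" where
  "const_ty t = (arg_ty t \<or> (\<exists>n. n \<ge> 1 \<and> t = ifun n))"

fun ty_ge :: "ty \<Rightarrow> ty \<Rightarrow> bool" where
  "ty_ge (Fn a b) t' = (Fn a b = t' \<or> ty_ge b t')"
| "ty_ge t t' = (t = t')"

datatype trm = TVar string ty | TCon string ty | TApp trm trm

fun ty_of :: "trm \<Rightarrow> ty option" where
  "ty_of (TVar x t) = (if arg_ty t then Some t else None)"
| "ty_of (TCon c t) = (if const_ty t then Some t else None)"
| "ty_of (TApp s u) = (case (ty_of s, ty_of u) of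
      (Some (Fn a b), Some a') \<Rightarrow> (if a = a' then Some b else None)
    | _ \<Rightarrow> None)"

fun vars_trm :: "trm \<Rightarrow> (string \<times> ty) set" where
  "vars_trm (TVar x t) = {(x, t)}"
| "vars_trm (TCon c t) = {}"
| "vars_trm (TApp s u) = vars_trm s \<union> vars_trm u"

fun consts_trm :: "trm \<Rightarrow> (string \<times> ty) set" where
  "consts_trm (TVar x t) = {}"
| "consts_trm (TCon c t) = {(c, t)}"
| "consts_trm (TApp s u) = consts_trm s \<union> consts_trm u"

fun hd_sym :: "trm \<Rightarrow> trm" where
  "hd_sym (TApp s u) = hd_sym s"
| "hd_sym t = t"

fun subst :: "((string \<times> ty) \<Rightarrow> trm) \<Rightarrow> trm \<Rightarrow> trm" where
  "subst \<sigma> (TVar x t) = \<sigma> (x, t)"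
| "subst \<sigma> (TCon c t) = TCon c t"
| "subst \<sigma> (TApp s u) = TApp (subst \<sigma> s) (subst \<sigma> u)"

datatype lit = Pos trm | Eq trm trm | Neg trm

fun lit_trms :: "lit \<Rightarrow> trm set" where
  "lit_trms (Pos a) = {a}"
| "lit_trms (Eq s t) = {s, t}"
| "lit_trms (Neg a) = {a}"

fun subst_lit :: "((string \<times> ty) \<Rightarrow> trm) \<Rightarrow> lit \<Rightarrow> lit" where
  "subst_lit \<sigma> (Pos a) = Pos (subst \<sigma> a)"
| "subst_lit \<sigma> (Eq s t) = Eq (subst \<sigma> s) (subst \<sigma> t)"
| "subst_lit \<sigma> (Neg a) = Neg (subst \<sigma> a)"

fun wf_lit :: "lit \<Rightarrow> bool" where
  "wf_lit (Pos a) = (ty_of a = Some Bool)"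
| "wf_lit (Eq s t) = (ty_of s = Some Iota \<and> ty_of t = Some Iota)"
| "wf_lit (Neg a) = (ty_of a = Some Bool)"

text \<open>A clause  p V1 ... Vn <- L1, ..., Lm : head predicate constant, head variables,
  body literals.\<close>
datatype clause = Clause "string \<times> ty" "(string \<times> ty) list" "lit list"

fun clause_head :: "clause \<Rightarrow> trm" where
  "clause_head (Clause p vs body) =
     foldl TApp (TCon (fst p) (snd p)) (map (\<lambda>(x, t). TVar x t) vs)"

fun clause_body :: "clause \<Rightarrow> lit list" where
  "clause_body (Clause p vs body) = body"

fun clause_pred :: "clause \<Rightarrow> string \<times> ty" where
  "clause_pred (Clause p vs body) = p"

fun wf_clause :: "clause \<Rightarrow> bool" where
  "wf_clause (Clause p vs body) =
     (pred_ty (snd p) \<and> snd p = foldr Fn (map snd vs) Bool \<and> distinct vs \<and>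
      (\<forall>l \<in> set body. wf_lit l))"

definition vars_clause :: "clause \<Rightarrow> (string \<times> ty) set" where
  "vars_clause c = vars_trm (clause_head c) \<union>
     (\<Union>l \<in> set (clause_body c). \<Union>t \<in> lit_trms l. vars_trm t)"

definition consts_clause :: "clause \<Rightarrow> (string \<times> ty) set" where
  "consts_clause c = consts_trm (clause_head c) \<union>
     (\<Union>l \<in> set (clause_body c). \<Union>t \<in> lit_trms l. consts_trm t)"

definition wf_program :: "clause set \<Rightarrow> bool" where
  "wf_program P = (finite P \<and> (\<forall>c \<in> P. wf_clause c))"

definition consts_prog :: "clause set \<Rightarrow> (string \<times> ty) set" where
  "consts_prog P = (\<Union>c \<in> P. consts_clause c)"

definition pconsts :: "clause set \<Rightarrow> (string \<times> ty) set" where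
  "pconsts P = {q \<in> consts_prog P. pred_ty (snd q)}"

text \<open>The partition S_1,...,S_r of the (finitely many) predicate constants of P is
  represented by the stratum function st.\<close>
definition stratified :: "clause set \<Rightarrow> bool" where
  "stratified P = (\<exists>st :: string \<times> ty \<Rightarrow> nat. \<forall>c \<in> P. \<forall>l \<in> set (clause_body c).
     (case l of
        Pos a \<Rightarrow> (case hd_sym a of
            TCon q tq \<Rightarrow> st (q, tq) \<le> st (clause_pred c)
          | TVar Q tQ \<Rightarrow> (\<forall>q \<in> pconsts P. ty_ge (snd q) tQ \<longrightarrow> st q \<le> st (clause_pred c))
          | TApp _ _ \<Rightarrow> True)
      | Neg a \<Rightarrow> (case hd_sym a of
            TCon q tq \<Rightarrow> st (q, tq) < st (clause_pred c)
          | TVar Q tQ \<Rightarrow> (\<forall>q \<in> pconsts P. ty_ge (snd q) tQ \<longrightarrow> st q < st (clause_pred c))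
          | TApp _ _ \<Rightarrow> True)
      | Eq _ _ \<Rightarrow> True))"

definition U :: "clause set \<Rightarrow> ty \<Rightarrow> trm set" where
  "U P t = {d. ty_of d = Some t \<and> vars_trm d = {} \<and> consts_trm d \<subseteq> consts_prog P}"

text \<open>Gr(P), as pairs (ground head atom, ground body literals).\<close>
definition gr :: "clause set \<Rightarrow> (trm \<times> lit list) set" where
  "gr P = {(subst \<sigma> (clause_head c), map (subst_lit \<sigma>) (clause_body c)) | c \<sigma>.
             c \<in> P \<and> (\<forall>(x, t) \<in> vars_clause c. \<sigma> (x, t) \<in> U P t)}"

fun lit_holds :: "trm set \<Rightarrow> trm set \<Rightarrow> lit \<Rightarrow> bool" where
  "lit_holds Iset J (Pos a) = (a \<in> Iset)"
| "lit_holds Iset J (Eq s t) = (s = t)"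
| "lit_holds Iset J (Neg a) = (a \<notin> J)"

text \<open>Gelfond-Lifschitz style operator: least model of the reduct of Gr(P) w.r.t. J.\<close>
definition Gamma :: "clause set \<Rightarrow> trm set \<Rightarrow> trm set" where
  "Gamma P J = lfp (\<lambda>Iset. {h. \<exists>body. (h, body) \<in> gr P \<and> (\<forall>l \<in> set body. lit_holds Iset J l)})"

text \<open>Well-founded model via the alternating fixpoint (Van Gelder).\<close>
definition wf_true :: "clause set \<Rightarrow> trm set" where
  "wf_true P = lfp (\<lambda>J. Gamma P (Gamma P J))"

definition wf_not_false :: "clause set \<Rightarrow> trm set" where
  "wf_not_false P = Gamma P (wf_true P)"

datatype tv = FF | UU | TT

definition wf_val :: "clause set \<Rightarrow> trm \<Rightarrow> tv" where
  "wf_val P a = (if a \<in> wf_true P then TT else if a \<in> wf_not_false P then UU else FF)"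

fun ext_eq :: "clause set \<Rightarrow> (trm \<Rightarrow> tv) \<Rightarrow> ty \<Rightarrow> trm \<Rightarrow> trm \<Rightarrow> bool" where
  "ext_eq P v Iota d d' = (d = d')"
| "ext_eq P v Bool d d' = (v d = v d')"
| "ext_eq P v (Fn a b) d d' =
     (\<forall>e \<in> U P a. \<forall>e' \<in> U P a. ext_eq P v a e e' \<longrightarrow> ext_eq P v b (TApp d e) (TApp d' e'))"

definition extensional :: "clause set \<Rightarrow> (trm \<Rightarrow> tv) \<Rightarrow> bool" where
  "extensional P v = (\<forall>\<rho>. arg_ty \<rho> \<longrightarrow> (\<forall>d \<in> U P \<rho>. ext_eq P v \<rho> d d))"

end

theory Submission
  imports Defs "HOL-Library.Product_Lexorder" "HOL-Library.Order_Continuity"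
begin

text \<open>Stratification makes the well-founded model two-valued: the alternating fixpoint is
  determined stratum by stratum, because the negative premises of an atom lie in lower strata.
  Let M be this model; at type o extensional equality is equality of membership in M.
  Reflexivity at higher types is shown with a logical relation indexed by pairs (s, j), ordered
  lexicographically: at type o, d and d' are related at (s, j) if membership in the
  approximation of M by the atoms of stratum below s and the atoms of stratum s derived in
  j rounds of the immediate consequence operator is transferred to membership in M.
  Every ground term is related to itself at every index (the fundamental property), by
  well-founded induction on the index: an atom p xs of stratum s derived in j + 1 rounds is
  rederived for related arguments ys by the same clause, whose body atoms lie at index (s, j)
  or, for negative ones, in lower strata. Being related at every index coincides with
  extensional equality, which is therefore reflexive.\<close>

lemma ty_ge_refl [simp]: "ty_ge t t"
  by (cases t) auto

lemma ty_ge_Fn_result: "ty_ge t (Fn a b) \<Longrightarrow> ty_ge t b"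
  by (induction t) auto

lemma ty_ge_trans: "ty_ge a b \<Longrightarrow> ty_ge b c \<Longrightarrow> ty_ge a c"
  by (induction a arbitrary: b) auto

lemma not_ty_ge_ifun_Bool: "\<not> ty_ge (ifun n) Bool"
  by (induction n) auto

lemma pred_ty_if_ty_ge_Bool: "const_ty t \<Longrightarrow> ty_ge t Bool \<Longrightarrow> pred_ty t"
  using not_ty_ge_ifun_Bool by (auto simp: const_ty_def arg_ty_def)

lemma pred_ty_foldr_Fn: "pred_ty t \<Longrightarrow> \<exists>ts. t = foldr Fn ts Bool"
proof (induction t)
  case (Fn a b)
  then obtain ts where "b = foldr Fn ts Bool" by auto
  then show ?case by (intro exI[of _ "a # ts"]) simp
qed (auto intro: exI[of _ "[]"])

lemma foldr_Fn_Bool_inject: "foldr Fn xs Bool = foldr Fn ys Bool \<Longrightarrow> xs = ys"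
  by (induction xs arbitrary: ys) (case_tac ys; auto)+

lemma ty_of_TApp_eq_Some:
  "ty_of (TApp s u) = Some \<tau> \<longleftrightarrow> (\<exists>a. ty_of s = Some (Fn a \<tau>) \<and> ty_of u = Some a)"
  by (auto split: option.splits ty.splits if_splits)

declare ty_of.simps(3) [simp del] ty_of_TApp_eq_Some [simp]

lemma ty_ge_ty_of_hd_sym: "ty_of t = Some \<tau> \<Longrightarrow> \<exists>\<tau>'. ty_of (hd_sym t) = Some \<tau>' \<and> ty_ge \<tau>' \<tau>"
proof (induction t arbitrary: \<tau>)
  case (TApp s u)
  then obtain a where "ty_of s = Some (Fn a \<tau>)" by auto
  with TApp.IH(1) show ?case by (auto dest: ty_ge_Fn_result)
qed auto

lemma hd_sym_neq_TApp: "hd_sym t \<noteq> TApp a b"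
  by (induction t) auto

lemma hd_sym_TVar_in_vars: "hd_sym t = TVar x \<tau> \<Longrightarrow> (x, \<tau>) \<in> vars_trm t"
  by (induction t) auto

lemma hd_sym_TCon_in_consts: "hd_sym t = TCon c \<tau> \<Longrightarrow> (c, \<tau>) \<in> consts_trm t"
  by (induction t) auto

lemma hd_sym_subst:
  "hd_sym (subst \<sigma> t) = (case hd_sym t of TVar x \<tau> \<Rightarrow> hd_sym (\<sigma> (x, \<tau>)) | h \<Rightarrow> h)"
  by (induction t) (auto split: trm.splits)

lemma hd_sym_foldl_TApp: "hd_sym (foldl TApp h xs) = hd_sym h"
  by (induction xs arbitrary: h) auto

lemma subst_foldl_TApp: "subst \<sigma> (foldl TApp h xs) = foldl TApp (subst \<sigma> h) (map (subst \<sigma>) xs)"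
  by (induction xs arbitrary: h) auto

lemma foldl_TApp_TCon_inject:
  "foldl TApp (TCon c \<tau>) xs = foldl TApp (TCon c' \<tau>') ys \<Longrightarrow> c = c' \<and> \<tau> = \<tau>' \<and> xs = ys"
proof (induction xs arbitrary: ys rule: rev_induct)
  case Nil
  then show ?case by (cases ys rule: rev_exhaust) auto
next
  case (snoc x xs)
  then show ?case by (cases ys rule: rev_exhaust) auto
qed

lemma TApp_in_U: "d \<in> U P (Fn a b) \<Longrightarrow> e \<in> U P a \<Longrightarrow> TApp d e \<in> U P b"
  by (auto simp: U_def)

lemma TApp_in_UD: "TApp d e \<in> U P b \<Longrightarrow> \<exists>a. d \<in> U P (Fn a b) \<and> e \<in> U P a"
  by (auto simp: U_def)

lemma TCon_in_U: "(c, \<tau>) \<in> consts_prog P \<Longrightarrow> const_ty \<tau> \<Longrightarrow> TCon c \<tau> \<in> U P \<tau>"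
  by (auto simp: U_def)

lemma hd_sym_in_U:
  assumes "t \<in> U P \<tau>"
  shows "\<exists>c \<tau>'. hd_sym t = TCon c \<tau>' \<and> (c, \<tau>') \<in> consts_prog P \<and> const_ty \<tau>' \<and> ty_ge \<tau>' \<tau>"
proof -
  from assms have "ty_of t = Some \<tau>" by (simp add: U_def)
  then obtain \<tau>' where \<tau>': "ty_of (hd_sym t) = Some \<tau>'" "ty_ge \<tau>' \<tau>"
    using ty_ge_ty_of_hd_sym by blast
  show ?thesis
  proof (cases "hd_sym t")
    case (TVar x \<tau>'')
    with assms show ?thesis using hd_sym_TVar_in_vars by (force simp: U_def)
  next
    case (TCon c \<tau>'')
    with assms \<tau>' show ?thesis using hd_sym_TCon_in_consts by (force simp: U_def split: if_splits)
  qed (simp add: hd_sym_neq_TApp)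
qed

lemma subst_in_U:
  assumes "ty_of t = Some \<tau>" "consts_trm t \<subseteq> consts_prog P" "\<forall>v \<in> vars_trm t. \<sigma> v \<in> U P (snd v)"
  shows "subst \<sigma> t \<in> U P \<tau>"
  using assms
proof (induction t arbitrary: \<tau>)
  case (TApp s u)
  then show ?case by (auto intro!: TApp_in_U)
qed (auto simp: U_def split: if_splits)

lemma subst_clause_head:
  "subst \<sigma> (clause_head (Clause p vs body)) = foldl TApp (TCon (fst p) (snd p)) (map \<sigma> vs)"
proof -
  have "map (subst \<sigma>) (map (\<lambda>(x, t). TVar x t) vs) = map \<sigma> vs"
    by (auto simp: split_def)
  then show ?thesis by (simp only: clause_head.simps subst_foldl_TApp subst.simps)
qed

lemma gr_intro:
  assumes "Clause p vs body \<in> P" "\<forall>v \<in> vars_clause (Clause p vs body). \<sigma> v \<in> U P (snd v)"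
  shows "(foldl TApp (TCon (fst p) (snd p)) (map \<sigma> vs), map (subst_lit \<sigma>) body) \<in> gr P"
proof -
  have "(subst \<sigma> (clause_head (Clause p vs body)), map (subst_lit \<sigma>) (clause_body (Clause p vs body)))
      \<in> gr P"
    using assms unfolding gr_def by fastforce
  then show ?thesis by (simp only: subst_clause_head clause_body.simps)
qed

lemma gr_elim:
  assumes "(h, body) \<in> gr P"
  obtains p vs b \<sigma> where "Clause p vs b \<in> P" "\<forall>v \<in> vars_clause (Clause p vs b). \<sigma> v \<in> U P (snd v)"
    "h = foldl TApp (TCon (fst p) (snd p)) (map \<sigma> vs)" "body = map (subst_lit \<sigma>) b"
proof -
  from assms obtain c \<sigma> where c: "c \<in> P" "\<forall>(x, t) \<in> vars_clause c. \<sigma> (x, t) \<in> U P t"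
    "h = subst \<sigma> (clause_head c)" "body = map (subst_lit \<sigma>) (clause_body c)"
    unfolding gr_def by blast
  obtain p vs b where pvb: "c = Clause p vs b" by (cases c)
  with c(3) have "h = foldl TApp (TCon (fst p) (snd p)) (map \<sigma> vs)"
    by (simp only: subst_clause_head)
  with c pvb that show ?thesis by (auto simp: split_def)
qed

lemma clause_body_trm:
  assumes "Clause p vs b \<in> P" "l \<in> set b" "t \<in> lit_trms l"
  shows "consts_trm t \<subseteq> consts_prog P" "vars_trm t \<subseteq> vars_clause (Clause p vs b)"
  using assms by (auto simp: consts_prog_def consts_clause_def vars_clause_def)

definition Tp :: "clause set \<Rightarrow> trm set \<Rightarrow> trm set \<Rightarrow> trm set" where
  "Tp P J I = {h. \<exists>body. (h, body) \<in> gr P \<and> (\<forall>l \<in> set body. lit_holds I J l)}"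

lemma Gamma_eq_lfp_Tp: "Gamma P J = lfp (Tp P J)"
  by (simp add: Gamma_def Tp_def [abs_def])

lemma lit_holds_mono: "I \<subseteq> I' \<Longrightarrow> lit_holds I J l \<Longrightarrow> lit_holds I' J l"
  by (cases l) auto

lemma lit_holds_antimono: "J \<subseteq> J' \<Longrightarrow> lit_holds I J' l \<Longrightarrow> lit_holds I J l"
  by (cases l) auto

lemma mono_Tp: "mono (Tp P J)"
  unfolding mono_def Tp_def using lit_holds_mono by blast

lemma Tp_antimono: "J \<subseteq> J' \<Longrightarrow> Tp P J' I \<subseteq> Tp P J I"
  unfolding Tp_def using lit_holds_antimono by blast

lemma lits_hold_UN_chain:
  fixes K :: "nat \<Rightarrow> trm set"
  assumes "mono K" "\<forall>l \<in> set body. lit_holds (\<Union>i. K i) J l"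
  shows "\<exists>i. \<forall>l \<in> set body. lit_holds (K i) J l"
  using assms(2)
proof (induction body)
  case (Cons l body)
  then obtain j where j: "\<forall>l \<in> set body. lit_holds (K j) J l" by auto
  from Cons.prems obtain i where i: "lit_holds (K i) J l" by (cases l) auto
  have "K i \<subseteq> K (max i j)" by (rule monoD[OF assms(1)]) simp
  moreover have "K j \<subseteq> K (max i j)" by (rule monoD[OF assms(1)]) simp
  ultimately have "\<forall>l' \<in> set (l # body). lit_holds (K (max i j)) J l'"
    using i j lit_holds_mono by (metis set_ConsD)
  then show ?case by blast
qed simp

lemma sup_continuous_Tp: "sup_continuous (Tp P J)"
  unfolding sup_continuous_def
proof (intro allI impI)
  fix K :: "nat \<Rightarrow> trm set" assume "mono K"
  have "Tp P J (\<Union>i. K i) \<subseteq> (\<Union>i. Tp P J (K i))"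
  proof
    fix h assume "h \<in> Tp P J (\<Union>i. K i)"
    then obtain body where "(h, body) \<in> gr P" "\<forall>l \<in> set body. lit_holds (\<Union>i. K i) J l"
      unfolding Tp_def by blast
    moreover from this(2) obtain i where "\<forall>l \<in> set body. lit_holds (K i) J l"
      using lits_hold_UN_chain[OF \<open>mono K\<close>] by blast
    ultimately have "h \<in> Tp P J (K i)" unfolding Tp_def by blast
    then show "h \<in> (\<Union>i. Tp P J (K i))" by blast
  qed
  moreover have "(\<Union>i. Tp P J (K i)) \<subseteq> Tp P J (\<Union>i. K i)"
    using monoD[OF mono_Tp] by blast
  ultimately show "Tp P J (SUP i. K i) = (SUP i. Tp P J (K i))" by auto
qed

lemma Gamma_antimono: "J \<subseteq> J' \<Longrightarrow> Gamma P J' \<subseteq> Gamma P J"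
  unfolding Gamma_eq_lfp_Tp by (rule lfp_mono) (use Tp_antimono in auto)

lemma Gamma_unfold: "Gamma P J = Tp P J (Gamma P J)"
  unfolding Gamma_eq_lfp_Tp by (rule lfp_unfold [OF mono_Tp])

lemma wf_true_eq_Gamma_wf_not_false: "wf_true P = Gamma P (wf_not_false P)"
  unfolding wf_not_false_def wf_true_def
  by (rule lfp_unfold) (intro monoI Gamma_antimono)

definition atom_stratum :: "(string \<times> ty \<Rightarrow> nat) \<Rightarrow> trm \<Rightarrow> nat" where
  "atom_stratum st a = (case hd_sym a of TCon q \<tau> \<Rightarrow> st (q, \<tau>) | _ \<Rightarrow> 0)"

lemma atom_stratum_foldl_TApp: "atom_stratum st (foldl TApp (TCon c \<tau>) xs) = st (c, \<tau>)"
  by (simp add: atom_stratum_def hd_sym_foldl_TApp)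

definition head_bounded ::
    "clause set \<Rightarrow> (string \<times> ty \<Rightarrow> nat) \<Rightarrow> (nat \<Rightarrow> nat \<Rightarrow> bool) \<Rightarrow> trm \<Rightarrow> nat \<Rightarrow> bool" where
  "head_bounded P st R a k = (case hd_sym a of
      TCon q \<tau> \<Rightarrow> R (st (q, \<tau>)) k
    | TVar Q \<tau> \<Rightarrow> (\<forall>q \<in> pconsts P. ty_ge (snd q) \<tau> \<longrightarrow> R (st q) k)
    | TApp _ _ \<Rightarrow> True)"

definition stratification :: "clause set \<Rightarrow> (string \<times> ty \<Rightarrow> nat) \<Rightarrow> bool" where
  "stratification P st = (\<forall>c \<in> P. \<forall>l \<in> set (clause_body c). case l of
      Pos a \<Rightarrow> head_bounded P st (\<le>) a (st (clause_pred c))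
    | Neg a \<Rightarrow> head_bounded P st (<) a (st (clause_pred c))
    | Eq _ _ \<Rightarrow> True)"

lemma stratified_iff_stratification: "stratified P \<longleftrightarrow> (\<exists>st. stratification P st)"
  unfolding stratified_def stratification_def head_bounded_def ..

lemma head_bounded_subst:
  assumes "head_bounded P st R t k" "ty_of t = Some Bool" "consts_trm t \<subseteq> consts_prog P"
    and ground: "\<forall>v \<in> vars_trm t. \<sigma> v \<in> U P (snd v)"
  shows "R (atom_stratum st (subst \<sigma> t)) k"
proof (cases "hd_sym t")
  case (TVar Q \<tau>)
  then have "\<sigma> (Q, \<tau>) \<in> U P \<tau>" using ground hd_sym_TVar_in_vars by fastforce
  then obtain c \<tau>' where c: "hd_sym (\<sigma> (Q, \<tau>)) = TCon c \<tau>'" "(c, \<tau>') \<in> consts_prog P"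
    "const_ty \<tau>'" "ty_ge \<tau>' \<tau>"
    using hd_sym_in_U by blast
  from assms(2) TVar have "ty_ge \<tau> Bool"
    using ty_ge_ty_of_hd_sym by (fastforce split: if_splits)
  with c have "(c, \<tau>') \<in> pconsts P"
    using pred_ty_if_ty_ge_Bool ty_ge_trans by (auto simp: pconsts_def)
  with assms(1) TVar c show ?thesis
    by (auto simp: head_bounded_def atom_stratum_def hd_sym_subst)
next
  case (TCon c \<tau>)
  with assms(1) show ?thesis by (simp add: head_bounded_def atom_stratum_def hd_sym_subst)
qed (simp add: hd_sym_neq_TApp)

lemma clause_body_stratum:
  assumes "wf_program P" "stratification P st" "Clause p vs b \<in> P"
    and ground: "\<forall>v \<in> vars_clause (Clause p vs b). \<sigma> v \<in> U P (snd v)"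
  shows "Pos t \<in> set b \<Longrightarrow> atom_stratum st (subst \<sigma> t) \<le> st p"
    and "Neg t \<in> set b \<Longrightarrow> atom_stratum st (subst \<sigma> t) < st p"
proof -
  have "wf_clause (Clause p vs b)" using assms(1,3) unfolding wf_program_def by blast
  then have ty: "ty_of t = Some Bool" if "Pos t \<in> set b \<or> Neg t \<in> set b" using that by auto
  have trm: "consts_trm t \<subseteq> consts_prog P" "\<forall>v \<in> vars_trm t. \<sigma> v \<in> U P (snd v)"
    if "l \<in> set b" "t \<in> lit_trms l" for l
    using clause_body_trm[OF assms(3) that] ground by auto
  have strat: "\<forall>l \<in> set b. case l of
      Pos a \<Rightarrow> head_bounded P st (\<le>) a (st p)
    | Neg a \<Rightarrow> head_bounded P st (<) a (st p)
    | Eq _ _ \<Rightarrow> True"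
    using bspec[OF assms(2)[unfolded stratification_def] assms(3)]
    by (simp only: clause_pred.simps clause_body.simps)
  show "Pos t \<in> set b \<Longrightarrow> atom_stratum st (subst \<sigma> t) \<le> st p"
    using head_bounded_subst[OF _ ty trm] strat by fastforce
  show "Neg t \<in> set b \<Longrightarrow> atom_stratum st (subst \<sigma> t) < st p"
    using head_bounded_subst[OF _ ty trm] strat by fastforce
qed

lemma Pos_eq_subst_lit_iff: "Pos a = subst_lit \<sigma> l \<longleftrightarrow> (\<exists>t. l = Pos t \<and> a = subst \<sigma> t)"
  by (cases l) auto

lemma Neg_eq_subst_lit_iff: "Neg a = subst_lit \<sigma> l \<longleftrightarrow> (\<exists>t. l = Neg t \<and> a = subst \<sigma> t)"
  by (cases l) auto

lemma gr_stratum: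
  assumes "wf_program P" "stratification P st" "(h, body) \<in> gr P"
  shows "Pos a \<in> set body \<Longrightarrow> atom_stratum st a \<le> atom_stratum st h"
    and "Neg a \<in> set body \<Longrightarrow> atom_stratum st a < atom_stratum st h"
proof -
  obtain p vs b \<sigma> where c: "Clause p vs b \<in> P" "\<forall>v \<in> vars_clause (Clause p vs b). \<sigma> v \<in> U P (snd v)"
    "h = foldl TApp (TCon (fst p) (snd p)) (map \<sigma> vs)" "body = map (subst_lit \<sigma>) b"
    using gr_elim[OF assms(3)] by blast
  have "atom_stratum st h = st p" using c(3) atom_stratum_foldl_TApp by simp
  moreover have "Pos a \<in> set body \<Longrightarrow> \<exists>t. Pos t \<in> set b \<and> a = subst \<sigma> t"
    and "Neg a \<in> set body \<Longrightarrow> \<exists>t. Neg t \<in> set b \<and> a = subst \<sigma> t"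
    using c(4) by (auto simp: Pos_eq_subst_lit_iff Neg_eq_subst_lit_iff)
  ultimately show "Pos a \<in> set body \<Longrightarrow> atom_stratum st a \<le> atom_stratum st h"
    and "Neg a \<in> set body \<Longrightarrow> atom_stratum st a < atom_stratum st h"
    using clause_body_stratum[OF assms(1,2) c(1,2)] by auto
qed

lemma Gamma_agree_upto_stratum:
  assumes "wf_program P" "stratification P st"
    and agree: "\<forall>a. atom_stratum st a < s \<longrightarrow> (a \<in> J \<longleftrightarrow> a \<in> J')"
  shows "Gamma P J \<inter> {a. atom_stratum st a \<le> s} \<subseteq> Gamma P J'"
proof -
  let ?S = "{a. atom_stratum st a \<le> s \<longrightarrow> a \<in> Gamma P J'}"
  have "Tp P J (lfp (Tp P J) \<inter> ?S) \<subseteq> ?S"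
  proof
    fix h assume "h \<in> Tp P J (lfp (Tp P J) \<inter> ?S)"
    then obtain body where hb: "(h, body) \<in> gr P" "\<forall>l \<in> set body. lit_holds (lfp (Tp P J) \<inter> ?S) J l"
      unfolding Tp_def by auto
    have "\<forall>l \<in> set body. lit_holds (Gamma P J') J' l" if "atom_stratum st h \<le> s"
    proof
      fix l assume l: "l \<in> set body"
      show "lit_holds (Gamma P J') J' l"
      proof (cases l)
        case (Pos a)
        with l that hb show ?thesis using gr_stratum(1)[OF assms(1,2) hb(1)] by fastforce
      next
        case (Neg a)
        with l that hb agree show ?thesis using gr_stratum(2)[OF assms(1,2) hb(1)] by fastforce
      qed (use hb(2) l in auto)
    qed
    then show "h \<in> ?S"
      using hb(1) Gamma_unfold[of P J'] unfolding Tp_def by blast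
  qed
  then have "lfp (Tp P J) \<subseteq> ?S" by (rule lfp_induct [OF mono_Tp, simplified])
  then show ?thesis unfolding Gamma_eq_lfp_Tp by auto
qed

lemma wf_not_false_eq_wf_true:
  assumes "wf_program P" "stratification P st"
  shows "wf_not_false P = wf_true P"
proof -
  let ?T = "wf_true P" and ?F = "wf_not_false P"
  have "\<forall>a. atom_stratum st a \<le> s \<longrightarrow> (a \<in> ?T \<longleftrightarrow> a \<in> ?F)" for s
  proof (induction s rule: less_induct)
    case (less s)
    then have "\<forall>a. atom_stratum st a < s \<longrightarrow> (a \<in> ?F \<longleftrightarrow> a \<in> ?T)" by auto
    then have "Gamma P ?F \<inter> {a. atom_stratum st a \<le> s} \<subseteq> Gamma P ?T"
      and "Gamma P ?T \<inter> {a. atom_stratum st a \<le> s} \<subseteq> Gamma P ?F"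
      using Gamma_agree_upto_stratum[OF assms] by blast+
    then show ?case
      using wf_true_eq_Gamma_wf_not_false[of P] unfolding wf_not_false_def by blast
  qed
  then show ?thesis by blast
qed

declare split_paired_All [simp del] split_paired_Ex [simp del]

fun Rel :: "clause set \<Rightarrow> ('i::order \<Rightarrow> trm set) \<Rightarrow> trm set \<Rightarrow> 'i \<Rightarrow> ty \<Rightarrow> trm \<Rightarrow> trm \<Rightarrow> bool" where
  "Rel P C M \<alpha> Iota d d' = (d = d')"
| "Rel P C M \<alpha> Bool d d' = ((d \<in> C \<alpha> \<longrightarrow> d' \<in> M) \<and> (d' \<in> C \<alpha> \<longrightarrow> d \<in> M))"
| "Rel P C M \<alpha> (Fn a b) d d' = (\<forall>\<beta> \<le> \<alpha>. \<forall>e \<in> U P a. \<forall>e' \<in> U P a.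
      Rel P C M \<beta> a e e' \<longrightarrow> Rel P C M \<beta> b (TApp d e) (TApp d' e'))"

fun Rel_list ::
    "clause set \<Rightarrow> ('i::order \<Rightarrow> trm set) \<Rightarrow> trm set \<Rightarrow> 'i \<Rightarrow> ty list \<Rightarrow> trm list \<Rightarrow> trm list \<Rightarrow> bool"
where
  "Rel_list P C M \<alpha> [] [] [] = True"
| "Rel_list P C M \<alpha> (t # ts) (x # xs) (y # ys) =
     (x \<in> U P t \<and> y \<in> U P t \<and> Rel P C M \<alpha> t x y \<and> Rel_list P C M \<alpha> ts xs ys)"
| "Rel_list P C M \<alpha> _ _ _ = False"

lemma Rel_sym: "Rel P C M \<alpha> \<tau> d d' \<Longrightarrow> Rel P C M \<alpha> \<tau> d' d"
proof (induction \<tau> arbitrary: \<alpha> d d')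
  case (Fn a b)
  show ?case
  proof (simp only: Rel.simps, intro allI impI ballI)
    fix \<beta> e e' assume "\<beta> \<le> \<alpha>" "e \<in> U P a" "e' \<in> U P a" "Rel P C M \<beta> a e e'"
    with Fn show "Rel P C M \<beta> b (TApp d' e) (TApp d e')" by auto
  qed
qed auto

lemma Rel_list_sym: "Rel_list P C M \<alpha> ts xs ys \<Longrightarrow> Rel_list P C M \<alpha> ts ys xs"
  by (induction P C M \<alpha> ts xs ys rule: Rel_list.induct) (auto intro: Rel_sym)

lemma Rel_antimono:
  assumes "mono C" "\<beta> \<le> \<alpha>" "Rel P C M \<alpha> \<tau> d d'"
  shows "Rel P C M \<beta> \<tau> d d'"
  using assms(2,3)
proof (induction \<tau> arbitrary: d d')
  case Bool
  then show ?case using monoD[OF assms(1)] by auto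
qed (auto intro: order_trans)

lemma Rel_list_antimono:
  assumes "mono C" "\<beta> \<le> \<alpha>" "Rel_list P C M \<alpha> ts xs ys"
  shows "Rel_list P C M \<beta> ts xs ys"
  using assms(3)
proof (induction ts arbitrary: xs ys)
  case Nil
  then show ?case by (cases xs; cases ys) auto
next
  case (Cons t ts)
  then show ?case by (cases xs; cases ys) (auto intro: Rel_antimono[OF assms(1,2)])
qed

lemma Rel_foldr_FnI:
  assumes "mono C"
    and "\<And>\<gamma> xs ys. \<gamma> \<le> \<alpha> \<Longrightarrow> Rel_list P C M \<gamma> ts xs ys \<Longrightarrow>
      Rel P C M \<gamma> Bool (foldl TApp d xs) (foldl TApp d' ys)"
  shows "Rel P C M \<alpha> (foldr Fn ts Bool) d d'"
  using assms(2)
proof (induction ts arbitrary: \<alpha> d d')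
  case Nil
  then show ?case by (metis Rel_list.simps(1) foldl_Nil foldr_Nil id_apply order_refl)
next
  case (Cons t ts)
  show ?case
  proof (simp only: foldr_Cons o_apply Rel.simps, intro allI impI ballI)
    fix \<beta> e e' assume e: "\<beta> \<le> \<alpha>" "e \<in> U P t" "e' \<in> U P t" "Rel P C M \<beta> t e e'"
    show "Rel P C M \<beta> (foldr Fn ts Bool) (TApp d e) (TApp d' e')"
    proof (rule Cons.IH)
      fix \<gamma> xs ys assume "\<gamma> \<le> \<beta>" "Rel_list P C M \<gamma> ts xs ys"
      with e have "\<gamma> \<le> \<alpha>" "Rel_list P C M \<gamma> (t # ts) (e # xs) (e' # ys)"
        using Rel_antimono[OF assms(1)] by auto
      then show "Rel P C M \<gamma> Bool (foldl TApp (TApp d e) xs) (foldl TApp (TApp d' e') ys)"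
        using Cons.prems by fastforce
    qed
  qed
qed

lemma Rel_foldr_FnD:
  "Rel P C M \<alpha> (foldr Fn ts Bool) d d' \<Longrightarrow> Rel_list P C M \<alpha> ts xs ys \<Longrightarrow>
    Rel P C M \<alpha> Bool (foldl TApp d xs) (foldl TApp d' ys)"
proof (induction ts arbitrary: d d' xs ys)
  case Nil
  then show ?case by (cases xs; cases ys) auto
next
  case (Cons t ts)
  then obtain x xs' y ys' where "xs = x # xs'" "ys = y # ys'" by (cases xs; cases ys) auto
  with Cons.prems have "Rel P C M \<alpha> (foldr Fn ts Bool) (TApp d x) (TApp d' y)"
    "Rel_list P C M \<alpha> ts xs' ys'"
    by auto
  with Cons.IH \<open>xs = x # xs'\<close> \<open>ys = y # ys'\<close> show ?case by simp
qed

lemma Rel_ifun: "Rel P C M \<alpha> (ifun n) d d"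
  by (induction n arbitrary: \<alpha> d) auto

lemma Rel_subst:
  assumes "ty_of t = Some \<tau>" "consts_trm t \<subseteq> consts_prog P"
    and "\<forall>v \<in> vars_trm t. \<sigma> v \<in> U P (snd v) \<and> \<sigma>' v \<in> U P (snd v) \<and> Rel P C M \<alpha> (snd v) (\<sigma> v) (\<sigma>' v)"
    and "\<forall>\<tau> e. e \<in> U P \<tau> \<longrightarrow> Rel P C M \<alpha> \<tau> e e"
  shows "Rel P C M \<alpha> \<tau> (subst \<sigma> t) (subst \<sigma>' t)"
  using assms
proof (induction t arbitrary: \<tau>)
  case (TVar x \<tau>')
  then show ?case by (auto split: if_splits)
next
  case (TCon c \<tau>')
  then show ?case by (auto simp: TCon_in_U split: if_splits)
next
  case (TApp s u)
  then obtain a where a: "ty_of s = Some (Fn a \<tau>)" "ty_of u = Some a" by auto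
  with TApp have "Rel P C M \<alpha> (Fn a \<tau>) (subst \<sigma> s) (subst \<sigma>' s)" "Rel P C M \<alpha> a (subst \<sigma> u) (subst \<sigma>' u)"
    and "subst \<sigma> u \<in> U P a" "subst \<sigma>' u \<in> U P a"
    by (auto intro!: subst_in_U)
  then show ?case by auto
qed

lemma exists_Rel_subst:
  assumes "distinct vs" "Rel_list P C M \<alpha> (map snd vs) (map \<sigma> vs) ys"
    and refl: "\<forall>\<tau> e. e \<in> U P \<tau> \<longrightarrow> Rel P C M \<alpha> \<tau> e e"
    and ground: "\<forall>v \<in> V. \<sigma> v \<in> U P (snd v)"
  shows "\<exists>\<sigma>'. map \<sigma>' vs = ys \<and> (\<forall>v \<in> V. \<sigma>' v \<in> U P (snd v) \<and> Rel P C M \<alpha> (snd v) (\<sigma> v) (\<sigma>' v))"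
  using assms(1,2)
proof (induction vs arbitrary: ys)
  case Nil
  then show ?case using refl ground by (cases ys) auto
next
  case (Cons v vs)
  then obtain y ys' where ys: "ys = y # ys'" by (cases ys) auto
  with Cons obtain \<sigma>' where \<sigma>': "map \<sigma>' vs = ys'"
    "\<forall>w \<in> V. \<sigma>' w \<in> U P (snd w) \<and> Rel P C M \<alpha> (snd w) (\<sigma> w) (\<sigma>' w)"
    by auto
  from Cons.prems have "v \<notin> set vs" by simp
  then have "map (\<sigma>'(v := y)) vs = ys'" using \<sigma>'(1) by simp
  with Cons.prems ys \<sigma>'(2) show ?case by (intro exI[of _ "\<sigma>'(v := y)"]) auto
qed

locale stratified_program =
  fixes P :: "clause set" and st :: "string \<times> ty \<Rightarrow> nat"
  assumes wf_program: "wf_program P" and stratification: "stratification P st"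
begin

abbreviation model :: "trm set" where
  "model \<equiv> wf_true P"

lemma Gamma_model: "Gamma P model = model"
  using wf_not_false_eq_wf_true[OF wf_program stratification] by (simp add: wf_not_false_def)

lemma Tp_model: "Tp P model model = model"
  using Gamma_unfold[of P model] Gamma_model by simp

lemma wf_val_eq: "wf_val P a = (if a \<in> model then TT else FF)"
  using wf_not_false_eq_wf_true[OF wf_program stratification] by (simp add: wf_val_def)

definition stage :: "nat \<Rightarrow> trm set" where
  "stage j = (Tp P model ^^ j) {}"

lemma stage_Suc: "stage (Suc j) = Tp P model (stage j)"
  by (simp add: stage_def)

lemma mono_stage: "mono stage"
  unfolding stage_def by (rule mono_funpow [OF mono_Tp])

lemma model_eq_UN_stage: "model = (\<Union>j. stage j)"
  using Gamma_model sup_continuous_lfp[OF sup_continuous_Tp, of P model]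
  by (simp add: Gamma_eq_lfp_Tp stage_def)

definition approx :: "nat \<times> nat \<Rightarrow> trm set" where
  "approx \<alpha> = {a \<in> model. atom_stratum st a < fst \<alpha>} \<union> {a \<in> stage (snd \<alpha>). atom_stratum st a = fst \<alpha>}"

lemma approx_subset_model: "approx \<alpha> \<subseteq> model"
  using model_eq_UN_stage by (auto simp: approx_def)

lemma mono_approx: "mono approx"
proof
  fix \<alpha> \<beta> :: "nat \<times> nat" assume "\<alpha> \<le> \<beta>"
  then show "approx \<alpha> \<subseteq> approx \<beta>"
    using model_eq_UN_stage monoD[OF mono_stage]
    by (cases \<alpha>; cases \<beta>) (auto simp: approx_def)
qed

lemma in_approx_stratum: "a \<in> model \<Longrightarrow> \<exists>j. a \<in> approx (atom_stratum st a, j)"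
  using model_eq_UN_stage by (auto simp: approx_def)

definition fundamental :: "nat \<times> nat \<Rightarrow> bool" where
  "fundamental \<alpha> = (\<forall>\<tau> t. t \<in> U P \<tau> \<longrightarrow> Rel P approx model \<alpha> \<tau> t t)"

lemma fundamentalI:
  assumes "\<And>c \<tau> ts \<gamma> xs ys. (c, \<tau>) \<in> consts_prog P \<Longrightarrow> const_ty \<tau> \<Longrightarrow> \<tau> = foldr Fn ts Bool \<Longrightarrow>
    \<gamma> \<le> \<alpha> \<Longrightarrow>
    Rel_list P approx model \<gamma> ts xs ys \<Longrightarrow>
    Rel P approx model \<gamma> Bool (foldl TApp (TCon c \<tau>) xs) (foldl TApp (TCon c \<tau>) ys)"
  shows "fundamental \<alpha>"
proof -
  have "Rel P approx model \<alpha> \<tau> t t" if "t \<in> U P \<tau>" for t \<tau>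
    using that
  proof (induction t arbitrary: \<tau>)
    case (TVar x \<tau>')
    then show ?case by (simp add: U_def)
  next
    case (TCon c \<tau>')
    then have "\<tau> = \<tau>'" "const_ty \<tau>'" "(c, \<tau>') \<in> consts_prog P"
      by (auto simp: U_def split: if_splits)
    then consider ts where "\<tau> = foldr Fn ts Bool" | n where "\<tau> = ifun n"
      using pred_ty_foldr_Fn ifun.simps(1) by (metis const_ty_def arg_ty_def)
    then show ?case
    proof cases
      case 1
      with \<open>\<tau> = \<tau>'\<close> \<open>(c, \<tau>') \<in> consts_prog P\<close> \<open>const_ty \<tau>'\<close> show ?thesis
        by (auto intro!: Rel_foldr_FnI[OF mono_approx] assms)
    qed (simp add: Rel_ifun)
  next
    case (TApp t u)
    then obtain a where "t \<in> U P (Fn a \<tau>)" "u \<in> U P a" using TApp_in_UD by blast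
    with TApp.IH show ?case by fastforce
  qed
  then show ?thesis unfolding fundamental_def by blast
qed

lemma lit_holds_transfer:
  assumes "fundamental (s, j)" "Clause p vs b \<in> P" "st p = s" "L \<in> set b"
    and related: "\<forall>v \<in> vars_clause (Clause p vs b).
      \<sigma> v \<in> U P (snd v) \<and> \<sigma>' v \<in> U P (snd v) \<and> Rel P approx model (s, j) (snd v) (\<sigma> v) (\<sigma>' v)"
    and holds: "lit_holds (stage j) model (subst_lit \<sigma> L)"
  shows "lit_holds model model (subst_lit \<sigma>' L)"
proof -
  have "wf_lit L" using wf_program assms(2,4) unfolding wf_program_def by auto
  have Rel_subst_L: "Rel P approx model (s, j) \<tau> (subst \<sigma> t) (subst \<sigma>' t)"
    if "t \<in> lit_trms L" "ty_of t = Some \<tau>" for t \<tau>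
    using Rel_subst[OF that(2)] clause_body_trm[OF assms(2,4) that(1)] related assms(1)
    unfolding fundamental_def by blast
  have stratum: "Pos t \<in> set b \<Longrightarrow> atom_stratum st (subst \<sigma> t) \<le> s"
      "Neg t \<in> set b \<Longrightarrow> atom_stratum st (subst \<sigma>' t) < s" for t
    using clause_body_stratum[OF wf_program stratification assms(2)] related assms(3) by auto
  show ?thesis
  proof (cases L)
    case (Pos t)
    with holds stratum assms(4) have "subst \<sigma> t \<in> approx (s, j)"
      using model_eq_UN_stage by (fastforce simp: approx_def)
    with Pos \<open>wf_lit L\<close> show ?thesis using Rel_subst_L[of t Bool] by simp
  next
    case (Neg t)
    with holds stratum assms(4) have "subst \<sigma> t \<notin> model"
      "subst \<sigma>' t \<in> model \<Longrightarrow> subst \<sigma>' t \<in> approx (s, j)"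
      by (auto simp: approx_def)
    with Neg \<open>wf_lit L\<close> show ?thesis using Rel_subst_L[of t Bool] by auto
  next
    case (Eq t u)
    with holds \<open>wf_lit L\<close> show ?thesis using Rel_subst_L[of t Iota] Rel_subst_L[of u Iota] by auto
  qed
qed

lemma atom_transfer_stage:
  assumes "fundamental (s, j)" "(c, \<tau>) \<in> consts_prog P" "\<tau> = foldr Fn ts Bool" "st (c, \<tau>) = s"
    and args: "Rel_list P approx model (s, j) ts xs ys"
    and derived: "foldl TApp (TCon c \<tau>) xs \<in> stage (Suc j)"
  shows "foldl TApp (TCon c \<tau>) ys \<in> model"
proof -
  from derived obtain body where gr: "(foldl TApp (TCon c \<tau>) xs, body) \<in> gr P"
    and holds: "\<forall>l \<in> set body. lit_holds (stage j) model l"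
    unfolding stage_Suc Tp_def by blast
  then obtain p vs b \<sigma> where cl: "Clause p vs b \<in> P"
      "\<forall>v \<in> vars_clause (Clause p vs b). \<sigma> v \<in> U P (snd v)"
      "foldl TApp (TCon c \<tau>) xs = foldl TApp (TCon (fst p) (snd p)) (map \<sigma> vs)"
      "body = map (subst_lit \<sigma>) b"
    using gr_elim[OF gr] by blast
  then have p: "p = (c, \<tau>)" and xs: "xs = map \<sigma> vs"
    using foldl_TApp_TCon_inject[OF cl(3)] by auto
  have "wf_clause (Clause p vs b)" using wf_program cl(1) unfolding wf_program_def by blast
  with p assms(3) have "distinct vs" "ts = map snd vs" using foldr_Fn_Bool_inject by auto
  with args xs obtain \<sigma>' where \<sigma>': "map \<sigma>' vs = ys"
      "\<forall>v \<in> vars_clause (Clause p vs b).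
        \<sigma>' v \<in> U P (snd v) \<and> Rel P approx model (s, j) (snd v) (\<sigma> v) (\<sigma>' v)"
    using exists_Rel_subst[OF _ _ _ cl(2)] assms(1) unfolding fundamental_def by blast
  then have "(foldl TApp (TCon c \<tau>) ys, map (subst_lit \<sigma>') b) \<in> gr P"
    using gr_intro[OF cl(1)] p by fastforce
  moreover have "\<forall>L \<in> set b. lit_holds model model (subst_lit \<sigma>' L)"
  proof
    fix L assume L: "L \<in> set b"
    have "\<forall>v \<in> vars_clause (Clause p vs b).
        \<sigma> v \<in> U P (snd v) \<and> \<sigma>' v \<in> U P (snd v) \<and> Rel P approx model (s, j) (snd v) (\<sigma> v) (\<sigma>' v)"
      using cl(2) \<sigma>'(2) by blast
    moreover have "lit_holds (stage j) model (subst_lit \<sigma> L)" using holds cl(4) L by simp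
    ultimately show "lit_holds model model (subst_lit \<sigma>' L)"
      using lit_holds_transfer[OF assms(1) cl(1) _ L] p assms(4) by simp
  qed
  ultimately have "foldl TApp (TCon c \<tau>) ys \<in> Tp P model model" unfolding Tp_def by fastforce
  then show ?thesis using Tp_model by simp
qed

lemma atom_transfer_approx:
  assumes IH: "\<And>\<beta>. \<beta> < \<alpha> \<Longrightarrow> fundamental \<beta>"
    and c: "(c, \<tau>) \<in> consts_prog P" "const_ty \<tau>" "\<tau> = foldr Fn ts Bool"
    and args: "Rel_list P approx model \<alpha> ts xs ys"
  shows "foldl TApp (TCon c \<tau>) xs \<in> approx \<alpha> \<Longrightarrow> foldl TApp (TCon c \<tau>) ys \<in> model"
proof -
  obtain s j where \<alpha>: "\<alpha> = (s, j)" by (cases \<alpha>)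
  let ?a = "foldl TApp (TCon c \<tau>) xs"
  assume "?a \<in> approx \<alpha>"
  then consider (lower) "?a \<in> model" "st (c, \<tau>) < s" | (current) "?a \<in> stage j" "st (c, \<tau>) = s"
    using \<alpha> by (auto simp: approx_def atom_stratum_foldl_TApp)
  then show "foldl TApp (TCon c \<tau>) ys \<in> model"
  proof cases
    case lower
    then obtain i where i: "?a \<in> approx (st (c, \<tau>), i)"
      using in_approx_stratum atom_stratum_foldl_TApp by metis
    have "(st (c, \<tau>), i) < \<alpha>" using lower(2) \<alpha> by simp
    then have "Rel P approx model (st (c, \<tau>), i) \<tau> (TCon c \<tau>) (TCon c \<tau>)"
      and "Rel_list P approx model (st (c, \<tau>), i) ts xs ys"
      using IH TCon_in_U[OF c(1,2)] Rel_list_antimono[OF mono_approx _ args]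
      by (auto simp: fundamental_def)
    with c(3) i show ?thesis using Rel_foldr_FnD by fastforce
  next
    case current
    then obtain j' where j: "j = Suc j'" by (cases j) (auto simp: stage_def)
    then have "fundamental (s, j')" and "Rel_list P approx model (s, j') ts xs ys"
      using IH \<alpha> Rel_list_antimono[OF mono_approx _ args] by auto
    with c current j show ?thesis using atom_transfer_stage by blast
  qed
qed

lemma fundamental: "fundamental \<alpha>"
proof (induction \<alpha> rule: less_induct)
  case (less \<alpha>)
  show ?case
  proof (rule fundamentalI)
    fix c \<tau> ts \<gamma> xs ys
    assume c: "(c, \<tau>) \<in> consts_prog P" "const_ty \<tau>" "\<tau> = foldr Fn ts Bool" and "\<gamma> \<le> \<alpha>"
      and args: "Rel_list P approx model \<gamma> ts xs ys"
    then have IH: "\<And>\<beta>. \<beta> < \<gamma> \<Longrightarrow> fundamental \<beta>"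
      using less.IH by auto
    show "Rel P approx model \<gamma> Bool (foldl TApp (TCon c \<tau>) xs) (foldl TApp (TCon c \<tau>) ys)"
      using atom_transfer_approx[OF IH c args] atom_transfer_approx[OF IH c Rel_list_sym[OF args]]
      by simp
  qed
qed

definition ext_eq_of_Rel :: "ty \<Rightarrow> bool" where
  "ext_eq_of_Rel \<tau> = (\<forall>d \<in> U P \<tau>. \<forall>d' \<in> U P \<tau>.
     (\<forall>\<alpha>. Rel P approx model \<alpha> \<tau> d d') \<longrightarrow> ext_eq P (wf_val P) \<tau> d d')"

text \<open>Two related pairs are needed: approx \<alpha> is not closed under extensional equality, so
  Rel cannot be transported along ext_eq on one side only.\<close>
definition Rel_ext_eq_closed :: "ty \<Rightarrow> bool" where
  "Rel_ext_eq_closed \<tau> = (\<forall>\<alpha>. \<forall>x \<in> U P \<tau>. \<forall>y \<in> U P \<tau>. \<forall>x' \<in> U P \<tau>. \<forall>y' \<in> U P \<tau>.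
     Rel P approx model \<alpha> \<tau> x y \<longrightarrow> Rel P approx model \<alpha> \<tau> x' y' \<longrightarrow>
     ext_eq P (wf_val P) \<tau> x x' \<longrightarrow> ext_eq P (wf_val P) \<tau> y y' \<longrightarrow> Rel P approx model \<alpha> \<tau> x y')"

lemma ext_eq_of_Rel_Bool: "ext_eq_of_Rel Bool"
  unfolding ext_eq_of_Rel_def
proof (intro ballI impI)
  fix d d' assume Rel: "\<forall>\<alpha>. Rel P approx model \<alpha> Bool d d'"
  have "d \<in> model \<longleftrightarrow> d' \<in> model"
    using in_approx_stratum Rel by (metis Rel.simps(2))
  then show "ext_eq P (wf_val P) Bool d d'" by (simp add: wf_val_eq)
qed

lemma Rel_ext_eq_closed_Bool: "Rel_ext_eq_closed Bool"
  using approx_subset_model unfolding Rel_ext_eq_closed_def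
  by (fastforce simp: wf_val_eq split: if_splits)

lemma ext_eq_refl_of_Rel: "ext_eq_of_Rel \<tau> \<Longrightarrow> e \<in> U P \<tau> \<Longrightarrow> ext_eq P (wf_val P) \<tau> e e"
  using fundamental unfolding ext_eq_of_Rel_def fundamental_def by blast

lemma Rel_of_ext_eq:
  "Rel_ext_eq_closed \<tau> \<Longrightarrow> e \<in> U P \<tau> \<Longrightarrow> e' \<in> U P \<tau> \<Longrightarrow> ext_eq P (wf_val P) \<tau> e e' \<Longrightarrow>
    Rel P approx model \<alpha> \<tau> e e'"
  using fundamental unfolding Rel_ext_eq_closed_def fundamental_def by blast

lemma ext_eq_of_Rel_Fn:
  assumes "ext_eq_of_Rel a" "Rel_ext_eq_closed a" "ext_eq_of_Rel b"
  shows "ext_eq_of_Rel (Fn a b)"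
  unfolding ext_eq_of_Rel_def
proof (intro ballI impI)
  fix d d' assume d: "d \<in> U P (Fn a b)" "d' \<in> U P (Fn a b)"
    and Rel: "\<forall>\<alpha>. Rel P approx model \<alpha> (Fn a b) d d'"
  show "ext_eq P (wf_val P) (Fn a b) d d'"
  proof (simp only: ext_eq.simps, intro ballI impI)
    fix e e' assume e: "e \<in> U P a" "e' \<in> U P a" "ext_eq P (wf_val P) a e e'"
    have "Rel P approx model \<alpha> b (TApp d e) (TApp d' e')" for \<alpha>
      using Rel[rule_format, of \<alpha>] Rel_of_ext_eq[OF assms(2) e, of \<alpha>] e(1,2) by auto
    with assms(3) d e show "ext_eq P (wf_val P) b (TApp d e) (TApp d' e')"
      unfolding ext_eq_of_Rel_def using TApp_in_U by blast
  qed
qed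

lemma Rel_ext_eq_closed_Fn:
  assumes "ext_eq_of_Rel a" "Rel_ext_eq_closed b"
  shows "Rel_ext_eq_closed (Fn a b)"
  unfolding Rel_ext_eq_closed_def
proof (intro allI ballI impI)
  fix \<alpha> x y x' y'
  assume U: "x \<in> U P (Fn a b)" "y \<in> U P (Fn a b)" "x' \<in> U P (Fn a b)" "y' \<in> U P (Fn a b)"
    and Rel: "Rel P approx model \<alpha> (Fn a b) x y" "Rel P approx model \<alpha> (Fn a b) x' y'"
    and ext: "ext_eq P (wf_val P) (Fn a b) x x'" "ext_eq P (wf_val P) (Fn a b) y y'"
  show "Rel P approx model \<alpha> (Fn a b) x y'"
  proof (simp only: Rel.simps, intro allI impI ballI)
    fix \<beta> e e' assume e: "\<beta> \<le> \<alpha>" "e \<in> U P a" "e' \<in> U P a" "Rel P approx model \<beta> a e e'"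
    have "Rel P approx model \<beta> b (TApp x e) (TApp y e')"
      and "Rel P approx model \<beta> b (TApp x' e) (TApp y' e')"
      using Rel e by auto
    moreover have "ext_eq P (wf_val P) b (TApp x e) (TApp x' e)"
      and "ext_eq P (wf_val P) b (TApp y e') (TApp y' e')"
      using ext ext_eq_refl_of_Rel[OF assms(1)] e(2,3) by auto
    ultimately show "Rel P approx model \<beta> b (TApp x e) (TApp y' e')"
      using assms(2) U e(2,3) TApp_in_U unfolding Rel_ext_eq_closed_def by meson
  qed
qed

lemma ext_eq_of_Rel_and_closed: "ext_eq_of_Rel \<tau> \<and> Rel_ext_eq_closed \<tau>"
proof (induction \<tau>)
  case Iota
  then show ?case by (simp add: ext_eq_of_Rel_def Rel_ext_eq_closed_def)
next
  case Bool
  then show ?case using ext_eq_of_Rel_Bool Rel_ext_eq_closed_Bool by blast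
next
  case (Fn a b)
  then show ?case using ext_eq_of_Rel_Fn Rel_ext_eq_closed_Fn by blast
qed

lemma extensional_wf_val: "extensional P (wf_val P)"
  unfolding extensional_def using ext_eq_refl_of_Rel ext_eq_of_Rel_and_closed by blast

end

theorem theorem2:
  assumes "wf_program P" and "stratified P"
  shows "extensional P (wf_val P)"
proof -
  from assms(2) obtain st where "stratification P st"
    unfolding stratified_iff_stratification by blast
  with assms(1) interpret stratified_program P st by unfold_locales
  show ?thesis by (rule extensional_wf_val)
qed

end
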